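(* Let $X_1,X_2,\dots$ be i.i.d. real random variables whose distribution function $F_X$ is continuous and strictly increasing on an interval $I$ with $\mathbb{P}(X_1\in I)=1$ and $F_X(I)=(0,1)$. Suppose $X_1$ has a continuous density $f$ that is positive at its median $m=F_X^{-1}(1/2)$. Let \[ \widehat b_{F_X,n}:=F_X^{-1}\!\left(\frac1n\sum_{i=1}^n F_X(X_i)\right). \] Then \[ \sqrt n\big(\widehat b_{F_X,n}-m\big)\xrightarrow{\ d\ }\mathcal N\!\left(0,\ \frac{1}{12\,f(m)^2}\right). \] *)

theory Defs
  imports "HOL-Probability.Probability"
begin

end

theory Submission
  imports Defs
begin

(* The variables F(X_i) are i.i.d. uniform on [0,1] (probability integral transform), so by the
   central limit theorem sqrt n (mean_n - 1/2) converges to N(0, 1/12), where mean_n is the sample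
   mean of the F(X_i). The estimator is the quantile function F^-1 applied to mean_n, and F^-1 has
   derivative 1/f(m) at 1/2 because F' = f. The delta method, proved here via Skorohod's
   representation theorem, turns this into the limit N(0, 1/(12 f(m)^2)). *)

lemma isCont_the_inv_into_strict_mono_on:
  fixes F :: "real \<Rightarrow> real"
  assumes I: "is_interval I" and mono: "strict_mono_on I F" and cont: "continuous_on I F"
    and "open (F ` I)" and y: "y \<in> F ` I"
  shows "isCont (the_inv_into I F) y"
proof -
  obtain e where "e > 0" and ball: "ball y e \<subseteq> F ` I"
    using \<open>open (F ` I)\<close> y by (auto simp: open_contains_ball)
  have "y - e/2 \<in> F ` I" "y + e/2 \<in> F ` I"
    using subsetD[OF ball, of "y - e/2"] subsetD[OF ball, of "y + e/2"] \<open>e > 0\<close>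
    by (simp_all add: dist_real_def)
  then obtain a b where ab: "a \<in> I" "b \<in> I" "F a = y - e/2" "F b = y + e/2"
    by (metis imageE)
  have sub: "{a..b} \<subseteq> I"
    using mem_is_interval_1_I[OF I ab(1,2)] by auto
  have "\<forall>x\<in>{a..b}. the_inv_into I F (F x) = x"
    using sub the_inv_into_f_f[OF strict_mono_on_imp_inj_on[OF mono]] by blast
  then have "continuous_on (F ` {a..b}) (the_inv_into I F)"
    using continuous_on_subset[OF cont sub] compact_Icc by (rule continuous_on_inv[rotated -1])
  moreover have "{y - e/2<..<y + e/2} \<subseteq> F ` {a..b}"
  proof
    fix w assume w: "w \<in> {y - e/2<..<y + e/2}"
    then obtain z where z: "z \<in> I" "w = F z"
      using ball by (force simp: dist_real_def)
    have "a < z" "z < b"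
      using w ab(3,4) z strict_mono_on_less[OF mono ab(1) z(1)] strict_mono_on_less[OF mono z(1) ab(2)]
      by simp_all
    then show "w \<in> F ` {a..b}"
      using z by auto
  qed
  ultimately have "continuous_on {y - e/2<..<y + e/2} (the_inv_into I F)"
    by (rule continuous_on_subset)
  then show ?thesis
    using \<open>e > 0\<close> by (simp add: continuous_on_eq_continuous_at)
qed

lemma the_inv_into_borel_measurable_strict_mono_on:
  fixes F :: "real \<Rightarrow> real"
  assumes "is_interval I" "strict_mono_on I F" "continuous_on I F" "open (F ` I)"
  shows "the_inv_into I F \<in> borel_measurable borel"
proof -
  have "continuous_on (F ` I) (the_inv_into I F)"
    using isCont_the_inv_into_strict_mono_on[OF assms] by (simp add: continuous_at_imp_continuous_on)
  \<comment> \<open>Off the image, the_inv_into returns the junk value THE x. False.\<close>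
  then have "(\<lambda>y. if y \<in> F ` I then the_inv_into I F y else (THE x. False)) \<in> borel_measurable borel"
    using \<open>open (F ` I)\<close> by (intro borel_measurable_continuous_on_if) auto
  moreover have "the_inv_into I F = (\<lambda>y. if y \<in> F ` I then the_inv_into I F y else (THE x. False))"
    by (rule ext) (auto simp: the_inv_into_def image_iff intro!: arg_cong[where f = The])
  ultimately show ?thesis
    by simp
qed

lemma DERIV_the_inv_into_strict_mono_on:
  fixes F :: "real \<Rightarrow> real"
  assumes "is_interval I" "strict_mono_on I F" "continuous_on I F" "open (F ` I)" "y \<in> F ` I"
    and "DERIV F (the_inv_into I F y) :> D" "D \<noteq> 0"
  shows "DERIV (the_inv_into I F) y :> inverse D"
proof -
  obtain e where "e > 0" and ball: "ball y e \<subseteq> F ` I"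
    using \<open>open (F ` I)\<close> \<open>y \<in> F ` I\<close> by (auto simp: open_contains_ball)
  have "F (the_inv_into I F z) = z" if "y - e < z" "z < y + e" for z
    using that ball strict_mono_on_imp_inj_on[OF \<open>strict_mono_on I F\<close>]
    by (intro f_the_inv_into_f) (auto simp: dist_real_def)
  moreover have "isCont (the_inv_into I F) y"
    using assms(1-5) by (rule isCont_the_inv_into_strict_mono_on)
  ultimately show ?thesis
    using assms(6,7) \<open>e > 0\<close> by (intro DERIV_inverse_function[where a = "y - e" and b = "y + e"]) auto
qed

lemma (in finite_borel_measure) borel_measurable_cdf:
  "cdf M \<in> borel_measurable borel"
  by (rule borel_measurable_mono) (auto simp: mono_def cdf_nondecreasing)

lemma DERIV_cdf_density:
  fixes f :: "real \<Rightarrow> real"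
  assumes nonneg: "\<And>x. f x \<ge> 0" and cont: "continuous_on UNIV f"
    and "prob_space (density lborel f)"
  shows "DERIV (cdf (density lborel f)) x :> f x"
proof -
  interpret real_distribution "density lborel f"
    using assms(3) by (simp add: real_distribution_def real_distribution_axioms_def)
  have [measurable]: "f \<in> borel_measurable borel"
    using cont by (rule borel_measurable_continuous_onI)
  define a where "a = x - 1"
  have cdf_eq: "cdf (density lborel f) u = cdf (density lborel f) a + (LBINT y=a..u. f y)"
    if "a < u" for u
  proof -
    have "cdf (density lborel f) u - cdf (density lborel f) a = measure (density lborel f) {a<..u}"
      using that by (rule cdf_diff_eq)
    also have "\<dots> = (\<integral>y. f y *\<^sub>R indicator {a<..u} y \<partial>lborel)"
      using nonneg by (subst integral_density[symmetric]) auto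
    also have "\<dots> = (LBINT y:{a<..u}. f y)"
      by (simp add: set_lebesgue_integral_def mult.commute)
    also have "\<dots> = (LBINT y=a..u. f y)"
      using that by (simp add: interval_integral_Ioc)
    finally show ?thesis by simp
  qed
  have "((\<lambda>u. LBINT y=a..u. f y) has_vector_derivative f x) (at x within {a..x + 1})"
    by (rule interval_integral_FTC2) (auto simp: a_def intro: continuous_on_subset[OF cont])
  moreover have "at x within {a..x + 1} = at x"
    by (rule at_within_interior) (auto simp: a_def)
  ultimately have "DERIV (\<lambda>u. LBINT y=a..u. f y) x :> f x"
    by (simp add: has_real_derivative_iff_has_vector_derivative)
  then have G: "DERIV (\<lambda>u. cdf (density lborel f) a + (LBINT y=a..u. f y)) x :> f x"
    by (auto intro!: derivative_eq_intros)
  have ev: "\<forall>\<^sub>F u in nhds x. cdf (density lborel f) u = cdf (density lborel f) a + (LBINT y=a..u. f y)"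
    by (rule eventually_mono[OF eventually_nhds_in_open[of "{a<..}" x]]) (auto simp: a_def cdf_eq)
  show ?thesis
    using G DERIV_cong_ev[OF refl ev refl] by simp
qed

lemma DERIV_the_inv_into_cdf_density:
  fixes f :: "real \<Rightarrow> real"
  defines "F \<equiv> cdf (density lborel f)"
  assumes "\<And>x. f x \<ge> 0" "continuous_on UNIV f" "prob_space (density lborel f)"
    and "is_interval I" "strict_mono_on I F" "open (F ` I)" "y \<in> F ` I"
    and "f (the_inv_into I F y) > 0"
  shows "DERIV (the_inv_into I F) y :> inverse (f (the_inv_into I F y))"
proof -
  have F_deriv: "DERIV F x :> f x" for x
    unfolding F_def using assms(2-4) by (rule DERIV_cdf_density)
  then have "continuous_on I F"
    by (meson DERIV_isCont continuous_at_imp_continuous_on)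
  with assms(5-9) F_deriv show ?thesis
    by (intro DERIV_the_inv_into_strict_mono_on) auto
qed

lemma (in real_distribution) measure_cdf_le:
  assumes I: "is_interval I" and "measure M I = 1"
    and mono: "strict_mono_on I (cdf M)" and img: "cdf M ` I = {0<..<1}"
    and t: "0 \<le> t" "t \<le> 1"
  shows "measure M {x. cdf M x \<le> t} = t"
proof -
  note borel_measurable_cdf [measurable]
  have [measurable]: "I \<in> sets borel"
    using I by (rule real_interval_borel_measurable)
  have "AE x in M. x \<in> I"
    using \<open>measure M I = 1\<close> by (intro AE_prob_1) simp
  then have restrict: "measure M A = measure M (A \<inter> I)" if [measurable]: "A \<in> sets borel" for A
    by (intro measure_eq_AE) auto
  have cdf_I: "cdf M x \<in> {0<..<1}" if "x \<in> I" for x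
    using img that by blast
  consider "t = 0" | "0 < t" "t < 1" | "t = 1"
    using t by linarith
  then show ?thesis
  proof cases
    case 1
    then have "{x. cdf M x \<le> t} \<inter> I = {}"
      using cdf_I by force
    then show ?thesis
      using restrict[of "{x. cdf M x \<le> t}"] 1 by simp
  next
    case 2
    then obtain x0 where x0: "x0 \<in> I" "cdf M x0 = t"
      using img by (metis greaterThanLessThan_iff imageE)
    have "{x. cdf M x \<le> t} \<inter> I = {..x0} \<inter> I"
      using x0 strict_mono_on_less_eq[OF mono] by auto
    then have "measure M {x. cdf M x \<le> t} = measure M {..x0}"
      using restrict[of "{x. cdf M x \<le> t}"] restrict[of "{..x0}"] by simp
    then show ?thesis
      using x0 by (simp add: cdf_def)
  next
    case 3
    then show ?thesis
      using cdf_bounded_prob prob_space by simp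
  qed
qed

lemma (in prob_space) uniform_distributed_cdf_comp:
  assumes [measurable]: "X \<in> borel_measurable M" and distr_X: "distr M borel X = \<mu>"
    and "is_interval I" "measure \<mu> I = 1" "strict_mono_on I (cdf \<mu>)" "cdf \<mu> ` I = {0<..<1}"
  shows "distributed M lborel (\<lambda>\<omega>. cdf \<mu> (X \<omega>)) (\<lambda>x. indicator {0..1} x / measure lborel {0..1::real})"
proof -
  interpret \<mu>: real_distribution \<mu>
    using distr_X by auto
  note \<mu>.borel_measurable_cdf [measurable]
  have prob_le: "\<P>(\<omega> in M. cdf \<mu> (X \<omega>) \<le> t) = (t - 0) / (1 - 0)" if "0 \<le> t" "t \<le> 1" for t
  proof -
    have "\<P>(\<omega> in M. cdf \<mu> (X \<omega>) \<le> t) = measure (distr M borel X) {x. cdf \<mu> x \<le> t}"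
      by (subst measure_distr) (auto intro!: arg_cong[where f = "measure M"])
    also have "\<dots> = t"
      unfolding distr_X using assms(3-6) that by (rule \<mu>.measure_cdf_le)
    finally show ?thesis by simp
  qed
  show ?thesis
    by (rule uniform_distrI_borel_atLeastAtMost) (use prob_le in auto)
qed

lemma standardized_sum_eq_scaled_mean_deviation:
  fixes u :: "nat \<Rightarrow> real" and m \<sigma> :: real
  assumes "\<sigma> > 0"
  shows "(\<Sum>i<n. u i - m) / sqrt (n * \<sigma>\<^sup>2) = sqrt n * ((\<Sum>i<n. u i) / n - m) / \<sigma>"
proof (cases "n = 0")
  case False
  obtain r where r: "real n = r\<^sup>2" "sqrt n = r" "r > 0"
    using False by (metis of_nat_0_le_iff of_nat_0_less_iff gr0I real_sqrt_gt_zero real_sqrt_pow2)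
  have "sqrt n * ((\<Sum>i<n. u i) / n - m) = ((\<Sum>i<n. u i) - n * m) / sqrt n"
    using r by (simp add: field_simps power2_eq_square)
  moreover have "sqrt (n * \<sigma>\<^sup>2) = sqrt n * \<sigma>"
    using assms by (simp add: real_sqrt_mult)
  ultimately show ?thesis
    by (simp add: sum_subtractf)
qed simp

lemma (in prob_space) central_limit_theorem_uniform:
  fixes U :: "nat \<Rightarrow> 'a \<Rightarrow> real"
  assumes indep: "indep_vars (\<lambda>i. borel) U UNIV"
    and unif: "\<And>i. distributed M lborel (U i) (\<lambda>x. indicator {0..1} x / measure lborel {0..1::real})"
  shows "weak_conv_m (\<lambda>n. distr M borel (\<lambda>\<omega>. sqrt n * ((\<Sum>i<n. U i \<omega>) / n - 1/2) / sqrt (1/12)))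
    std_normal_distribution"
proof -
  have [measurable]: "U i \<in> borel_measurable M" for i
    using indep by (simp add: indep_vars_def2)
  have "weak_conv_m (\<lambda>n. distr M borel (\<lambda>\<omega>. (\<Sum>i<n. U i \<omega> - 1/2) / sqrt (n * (sqrt (1/12))\<^sup>2)))
    std_normal_distribution"
  proof (rule central_limit_theorem[OF indep])
    show "expectation (U i) = 1/2" for i
      using uniform_distributed_expectation[OF unif[of i]] by simp
    show "variance (U i) = (sqrt (1/12))\<^sup>2" for i
      using uniform_distributed_variance[OF unif[of i]] by simp
    have "integrable lborel (\<lambda>x::real. x\<^sup>2 * indicator {0..1} x)"
      by (rule borel_integrable_atLeastAtMost) simp
    then show "integrable M (\<lambda>\<omega>. (U i \<omega>)\<^sup>2)" for i
      using distributed_integrable[OF unif[of i], of "\<lambda>x. x\<^sup>2"] by (simp add: mult.commute)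
    show "distr M borel (U i) = distr M borel (U 0)" for i
      using unif[THEN distributed_distr_eq_density] by (metis distr_cong sets_lborel)
  qed simp
  moreover have "(\<Sum>i<n. U i \<omega> - 1/2) / sqrt (n * (sqrt (1/12))\<^sup>2) =
      sqrt n * ((\<Sum>i<n. U i \<omega>) / n - 1/2) / sqrt (1/12)" for n \<omega>
    using standardized_sum_eq_scaled_mean_deviation[where u = "\<lambda>i. U i \<omega>" and \<sigma> = "sqrt (1/12)"] by simp
  ultimately show ?thesis
    by simp
qed

lemma (in prob_space) central_limit_theorem_cdf_comp:
  fixes X :: "nat \<Rightarrow> 'a \<Rightarrow> real"
  assumes indep: "indep_vars (\<lambda>i. borel) X UNIV" and ident: "\<And>i. distr M borel (X i) = \<mu>"
    and "is_interval I" "measure \<mu> I = 1" "strict_mono_on I (cdf \<mu>)" "cdf \<mu> ` I = {0<..<1}"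
  shows "weak_conv_m (\<lambda>n. distr M borel (\<lambda>\<omega>. sqrt n * ((\<Sum>i<n. cdf \<mu> (X i \<omega>)) / n - 1/2) / sqrt (1/12)))
    std_normal_distribution"
proof (rule central_limit_theorem_uniform)
  have [measurable]: "X i \<in> borel_measurable M" for i
    using indep by (simp add: indep_vars_def2)
  interpret \<mu>: real_distribution \<mu>
    using ident[of 0] by auto
  show "indep_vars (\<lambda>i. borel) (\<lambda>i \<omega>. cdf \<mu> (X i \<omega>)) UNIV"
    using indep by (rule indep_vars_compose2) (simp add: \<mu>.borel_measurable_cdf)
  show "distributed M lborel (\<lambda>\<omega>. cdf \<mu> (X i \<omega>)) (\<lambda>x. indicator {0..1} x / measure lborel {0..1::real})" for i
    using ident assms(3-6) by (intro uniform_distributed_cdf_comp) simp_all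
qed

lemma distr_std_normal_distribution_scale:
  assumes "c > 0"
  shows "distr std_normal_distribution borel (\<lambda>x. c * x) = density lborel (normal_density 0 c)"
proof -
  interpret prob_space std_normal_distribution
    using real_dist_normal_dist by (simp add: real_distribution_def)
  have "distributed std_normal_distribution lborel (\<lambda>x. x) std_normal_density"
    by (auto simp: distributed_def distr_id2)
  from normal_density_affine[OF this, of c 0] assms
  have "distributed std_normal_distribution lborel (\<lambda>x. c * x) (normal_density 0 c)"
    by simp
  then show ?thesis
    by (metis distributed_distr_eq_density distr_cong sets_lborel)
qed

lemma weak_conv_m_distr_continuous_convergence:
  fixes h :: "nat \<Rightarrow> real \<Rightarrow> real" and h_lim :: "real \<Rightarrow> real"
  assumes distr: "\<And>n. real_distribution (\<mu> n)" "real_distribution \<nu>" and conv: "weak_conv_m \<mu> \<nu>"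
    and [measurable]: "\<And>n. h n \<in> borel_measurable borel" "h_lim \<in> borel_measurable borel"
    and lim: "\<And>y ys. ys \<longlonglongrightarrow> y \<Longrightarrow> (\<lambda>n. h n (ys n)) \<longlonglongrightarrow> h_lim y"
  shows "weak_conv_m (\<lambda>n. distr (\<mu> n) borel (h n)) (distr \<nu> borel h_lim)"
proof -
  \<comment> \<open>Skorohod's representation turns weak convergence into pointwise convergence.\<close>
  obtain \<Omega> :: "real measure" and Y Y_lim where "prob_space \<Omega>"
    and [measurable]: "\<And>n. Y n \<in> borel_measurable \<Omega>" "Y_lim \<in> measurable \<Omega> lborel"
    and distr_Y: "\<And>n. distr \<Omega> borel (Y n) = \<mu> n" "distr \<Omega> borel Y_lim = \<nu>"
    and Y_lim: "\<And>\<omega>. \<omega> \<in> space \<Omega> \<Longrightarrow> (\<lambda>n. Y n \<omega>) \<longlonglongrightarrow> Y_lim \<omega>"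
    using Skorohod[OF distr conv] by metis
  interpret \<Omega>: prob_space \<Omega> by fact
  have [measurable]: "Y_lim \<in> borel_measurable \<Omega>"
    using \<open>Y_lim \<in> measurable \<Omega> lborel\<close> by simp
  have distr_h: "distr (\<mu> n) borel (h n) = distr \<Omega> borel (\<lambda>\<omega>. h n (Y n \<omega>))" for n
    unfolding distr_Y(1)[symmetric] by (subst distr_distr) (auto simp: comp_def)
  have distr_h_lim: "distr \<nu> borel h_lim = distr \<Omega> borel (\<lambda>\<omega>. h_lim (Y_lim \<omega>))"
    unfolding distr_Y(2)[symmetric] by (subst distr_distr) (auto simp: comp_def)
  show ?thesis
    unfolding distr_h distr_h_lim
  proof (rule integral_bdd_continuous_conv_imp_weak_conv)
    fix f :: "real \<Rightarrow> real"
    assume f: "\<And>x. isCont f x" "\<And>x. \<bar>f x\<bar> \<le> 1"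
    then have [measurable]: "f \<in> borel_measurable borel"
      by (intro borel_measurable_continuous_onI continuous_at_imp_continuous_on) auto
    have "AE \<omega> in \<Omega>. (\<lambda>n. f (h n (Y n \<omega>))) \<longlonglongrightarrow> f (h_lim (Y_lim \<omega>))"
      by (auto intro!: isCont_tendsto_compose[OF f(1)] lim Y_lim)
    then have "(\<lambda>n. \<integral>\<omega>. f (h n (Y n \<omega>)) \<partial>\<Omega>) \<longlonglongrightarrow> (\<integral>\<omega>. f (h_lim (Y_lim \<omega>)) \<partial>\<Omega>)"
      by (intro integral_dominated_convergence[where w = "\<lambda>_. 1"]) (auto simp: f(2))
    then show "(\<lambda>n. integral\<^sup>L (distr \<Omega> borel (\<lambda>\<omega>. h n (Y n \<omega>))) f)
        \<longlonglongrightarrow> integral\<^sup>L (distr \<Omega> borel (\<lambda>\<omega>. h_lim (Y_lim \<omega>))) f"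
      by (simp add: integral_distr)
  qed simp_all
qed

lemma DERIV_imp_tendsto_sqrt_scaled_increment:
  fixes g :: "real \<Rightarrow> real"
  assumes "DERIV g a :> D" and ys: "ys \<longlonglongrightarrow> y"
  shows "(\<lambda>n. sqrt n * (g (a + ys n / sqrt n) - g a)) \<longlonglongrightarrow> D * y"
proof -
  obtain G where G: "\<And>z. g z - g a = G z * (z - a)" "isCont G a" "G a = D"
    using assms(1) by (auto simp: DERIV_caratheodory_within)
  have "(\<lambda>n. inverse (sqrt (real n))) \<longlonglongrightarrow> 0"
    using filterlim_compose[OF sqrt_at_top filterlim_real_sequentially]
    by (rule tendsto_inverse_0_at_top)
  from tendsto_add[OF tendsto_const tendsto_mult[OF ys this]]
  have "(\<lambda>n. a + ys n / sqrt n) \<longlonglongrightarrow> a"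
    by (simp add: divide_inverse)
  then have "(\<lambda>n. G (a + ys n / sqrt n) * ys n) \<longlonglongrightarrow> D * y"
    using tendsto_mult[OF isCont_tendsto_compose[OF G(2)] ys] G(3) by simp
  moreover have "\<forall>\<^sub>F n in sequentially. G (a + ys n / sqrt n) * ys n = sqrt n * (g (a + ys n / sqrt n) - g a)"
    using G(1) by (intro eventually_sequentiallyI[of 1]) simp
  ultimately show ?thesis
    by (rule Lim_transform_eventually)
qed

lemma delta_method:
  fixes Z :: "nat \<Rightarrow> 'a \<Rightarrow> real" and g :: "real \<Rightarrow> real"
  assumes "prob_space M" and [measurable]: "\<And>n. Z n \<in> borel_measurable M"
    and conv: "weak_conv_m (\<lambda>n. distr M borel (\<lambda>\<omega>. sqrt n * (Z n \<omega> - a) / \<sigma>)) std_normal_distribution"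
    and [measurable]: "g \<in> borel_measurable borel" and "DERIV g a :> D"
    and "\<sigma> > 0" "D > 0"
  shows "weak_conv_m (\<lambda>n. distr M borel (\<lambda>\<omega>. sqrt n * (g (Z n \<omega>) - g a)))
    (density lborel (normal_density 0 (D * \<sigma>)))"
proof -
  interpret prob_space M by fact
  define h where "h n t = sqrt n * (g (a + \<sigma> * t / sqrt n) - g a)" for n :: nat and t
  have [measurable]: "h n \<in> borel_measurable borel" for n
    unfolding h_def by measurable
  have "weak_conv_m (\<lambda>n. distr (distr M borel (\<lambda>\<omega>. sqrt n * (Z n \<omega> - a) / \<sigma>)) borel (h n))
      (distr std_normal_distribution borel (\<lambda>t. (D * \<sigma>) * t))"
  proof (rule weak_conv_m_distr_continuous_convergence[OF _ real_dist_normal_dist conv])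
    show "(\<lambda>n. h n (ys n)) \<longlonglongrightarrow> D * \<sigma> * y" if "ys \<longlonglongrightarrow> y" for ys y
      using DERIV_imp_tendsto_sqrt_scaled_increment[OF \<open>DERIV g a :> D\<close> tendsto_mult_left[OF that, of \<sigma>]]
      by (simp add: h_def mult.assoc)
  qed simp_all
  moreover have "distr (distr M borel (\<lambda>\<omega>. sqrt n * (Z n \<omega> - a) / \<sigma>)) borel (h n) =
      distr M borel (\<lambda>\<omega>. sqrt n * (g (Z n \<omega>) - g a))" for n
    using \<open>\<sigma> > 0\<close> by (subst distr_distr) (auto simp: comp_def h_def intro!: distr_cong)
  ultimately show ?thesis
    using \<open>\<sigma> > 0\<close> \<open>D > 0\<close> by (simp add: distr_std_normal_distribution_scale)
qed

theorem mainTheorem9: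
  fixes M :: "'a measure"
    and X :: "nat \<Rightarrow> 'a \<Rightarrow> real"
    and I :: "real set"
    and f :: "real \<Rightarrow> real"
  assumes "prob_space M"
    and indep: "prob_space.indep_vars M (\<lambda>i. borel) X UNIV"
    and ident: "\<And>i. distr M borel (X i) = distr M borel (X 0)"
    and I_interval: "is_interval I"
    and I_full: "prob_space.prob M (X 0 -` I \<inter> space M) = 1"
    and F_cont: "continuous_on I (cdf (distr M borel (X 0)))"
    and F_strict: "strict_mono_on I (cdf (distr M borel (X 0)))"
    and F_image: "cdf (distr M borel (X 0)) ` I = {0<..<1}"
    and f_nonneg: "\<And>x. f x \<ge> 0"
    and f_density: "distributed M lborel (X 0) (\<lambda>x. ennreal (f x))"
    and f_cont: "continuous_on UNIV f"
    and f_median_pos: "f (the_inv_into I (cdf (distr M borel (X 0))) (1/2)) > 0"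
  shows "weak_conv_m
     (\<lambda>n. distr M borel
        (\<lambda>\<omega>. sqrt (real n) *
           (the_inv_into I (cdf (distr M borel (X 0)))
              ((\<Sum>i<n. cdf (distr M borel (X 0)) (X i \<omega>)) / real n)
            - the_inv_into I (cdf (distr M borel (X 0))) (1/2))))
     (density lborel (\<lambda>x. ennreal (normal_density 0
        (sqrt (1 / (12 * (f (the_inv_into I (cdf (distr M borel (X 0))) (1/2)))\<^sup>2))) x)))"
proof -
  interpret prob_space M by fact
  define \<mu> where "\<mu> = distr M borel (X 0)"
  define g where "g = the_inv_into I (cdf \<mu>)"
  have [measurable]: "X i \<in> borel_measurable M" for i
    using indep by (simp add: indep_vars_def2)
  interpret \<mu>: real_distribution \<mu>
    unfolding \<mu>_def by simp
  note \<mu>.borel_measurable_cdf [measurable]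
  have "measure \<mu> I = 1"
    using I_full real_interval_borel_measurable[OF I_interval] by (simp add: \<mu>_def measure_distr)
  with indep ident I_interval F_strict F_image
  have clt: "weak_conv_m (\<lambda>n. distr M borel
      (\<lambda>\<omega>. sqrt n * ((\<Sum>i<n. cdf \<mu> (X i \<omega>)) / n - 1/2) / sqrt (1/12))) std_normal_distribution"
    by (intro central_limit_theorem_cdf_comp) (simp_all add: \<mu>_def)
  have \<mu>_density: "\<mu> = density lborel f"
    using distributed_distr_eq_density[OF f_density] by (metis \<mu>_def distr_cong sets_lborel)
  have g_deriv: "DERIV g (1/2) :> inverse (f (g (1/2)))"
    using \<mu>.prob_space_axioms f_nonneg f_cont I_interval F_strict F_image f_median_pos
    unfolding g_def \<mu>_def[symmetric] \<mu>_density
    by (intro DERIV_the_inv_into_cdf_density) auto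
  have g_measurable: "g \<in> borel_measurable borel"
    using I_interval F_strict F_cont F_image unfolding g_def \<mu>_def
    by (intro the_inv_into_borel_measurable_strict_mono_on) simp_all
  have "(\<lambda>\<omega>. (\<Sum>i<n. cdf \<mu> (X i \<omega>)) / n) \<in> borel_measurable M" for n
    by measurable
  from delta_method[OF \<open>prob_space M\<close> this clt g_measurable g_deriv] f_median_pos
  have "weak_conv_m (\<lambda>n. distr M borel (\<lambda>\<omega>. sqrt n * (g ((\<Sum>i<n. cdf \<mu> (X i \<omega>)) / n) - g (1/2))))
      (density lborel (normal_density 0 (inverse (f (g (1/2))) * sqrt (1/12))))"
    by (simp add: g_def \<mu>_def)
  moreover have "inverse (f (g (1/2))) * sqrt (1/12) = sqrt (1 / (12 * (f (g (1/2)))\<^sup>2))"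
    using f_median_pos by (simp add: g_def \<mu>_def real_sqrt_divide real_sqrt_mult field_simps)
  ultimately show ?thesis
    by (simp add: g_def \<mu>_def)
qed

end
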